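(* Let $b_1$ be a positive integer with $b_1<n^*$. If $(\sigma^1,\sigma^2)$ is a Nash equilibrium of $\Gamma(b_1,1)$, then for every positive integer $b_2<m^*$ there exists $\hat\sigma^2\in\Delta(\mathcal A_2)$ (with $\mathcal A_2$ for budget $b_2$) such that $(\sigma^1,\hat\sigma^2)$ is a Nash equilibrium of $\Gamma(b_1,b_2)$; that is, equilibrium inspection strategies of $\Gamma(b_1,1)$ are equilibrium inspection strategies of every $\Gamma(b_1,b_2)$ with $b_2<m^*$.
   Context: Detection model: finite nonempty sets $\mathcal V$, $\mathcal E$, monitoring sets $\mathcal C_i\subseteq\mathcal E$ ($i\in\mathcal V$) with every $e\in\mathcal E$ in some $\mathcal C_i$; $\mathcal C_S=\bigcup_{i\in S}\mathcal C_i$; $F(S,T)=|\mathcal C_S\cap T|$. Set cover: $S\subseteq\mathcal V$ with $\mathcal C_S=\mathcal E$; $n^*$ = minimum size of a set cover. Set packing: $T\subseteq\mathcal E$ with $|\mathcal C_i\cap T|\le1$ for all $i$; $m^*$ = maximum size of a set packing. Game $\Gamma(b_1,b_2)$ ($b_1,b_2$ positive integers): $\mathcal A_1=\{S\subseteq\mathcal V:|S|\le b_1\}$, $\mathcal A_2=\{T\subseteq\mathcal E:|T|\le b_2\}$; mixed strategies $\sigma^1\in\Delta(\mathcal A_1)$, $\sigma^2\in\Delta(\mathcal A_2)$ (independent); payoffs $U_1=\mathbb E[F(S,T)]$, $U_2=\mathbb E[|T|]-\mathbb E[F(S,T)]$; Nash equilibrium in mixed strategies as usual. Note that the inspector's strategy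 set $\Delta(\mathcal A_1)$ does not depend on $b_2$. *)

theory Defs
  imports "HOL-Probability.Probability"
begin

definition cov :: "('v \<Rightarrow> 'e set) \<Rightarrow> 'v set \<Rightarrow> 'e set" where
  "cov C S = (\<Union>i\<in>S. C i)"

definition detF :: "('v \<Rightarrow> 'e set) \<Rightarrow> 'v set \<Rightarrow> 'e set \<Rightarrow> nat" where
  "detF C S T = card (cov C S \<inter> T)"

definition detection_model :: "'v set \<Rightarrow> 'e set \<Rightarrow> ('v \<Rightarrow> 'e set) \<Rightarrow> bool" where
  "detection_model V E C \<longleftrightarrow> finite V \<and> finite E \<and> V \<noteq> {} \<and> E \<noteq> {}
     \<and> (\<forall>i\<in>V. C i \<subseteq> E) \<and> (\<forall>e\<in>E. \<exists>i\<in>V. e \<in> C i)"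

definition is_set_cover :: "'v set \<Rightarrow> 'e set \<Rightarrow> ('v \<Rightarrow> 'e set) \<Rightarrow> 'v set \<Rightarrow> bool" where
  "is_set_cover V E C S \<longleftrightarrow> S \<subseteq> V \<and> cov C S = E"

definition n_star :: "'v set \<Rightarrow> 'e set \<Rightarrow> ('v \<Rightarrow> 'e set) \<Rightarrow> nat" where
  "n_star V E C = Min (card ` {S. is_set_cover V E C S})"

definition is_set_packing :: "'v set \<Rightarrow> 'e set \<Rightarrow> ('v \<Rightarrow> 'e set) \<Rightarrow> 'e set \<Rightarrow> bool" where
  "is_set_packing V E C T \<longleftrightarrow> T \<subseteq> E \<and> (\<forall>i\<in>V. card (C i \<inter> T) \<le> 1)"

definition m_star :: "'v set \<Rightarrow> 'e set \<Rightarrow> ('v \<Rightarrow> 'e set) \<Rightarrow> nat" where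
  "m_star V E C = Max (card ` {T. is_set_packing V E C T})"

definition A1 :: "'v set \<Rightarrow> nat \<Rightarrow> 'v set set" where
  "A1 V b1 = {S. S \<subseteq> V \<and> card S \<le> b1}"

definition A2 :: "'e set \<Rightarrow> nat \<Rightarrow> 'e set set" where
  "A2 E b2 = {T. T \<subseteq> E \<and> card T \<le> b2}"

definition mixed :: "'a set \<Rightarrow> 'a pmf set" where
  "mixed A = {p. set_pmf p \<subseteq> A}"

definition U1 :: "('v \<Rightarrow> 'e set) \<Rightarrow> 'v set pmf \<Rightarrow> 'e set pmf \<Rightarrow> real" where
  "U1 C s1 s2 = measure_pmf.expectation (pair_pmf s1 s2) (\<lambda>(S, T). real (detF C S T))"

definition U2 :: "('v \<Rightarrow> 'e set) \<Rightarrow> 'v set pmf \<Rightarrow> 'e set pmf \<Rightarrow> real" where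
  "U2 C s1 s2 = measure_pmf.expectation s2 (\<lambda>T. real (card T))
              - measure_pmf.expectation (pair_pmf s1 s2) (\<lambda>(S, T). real (detF C S T))"

definition is_NE :: "'v set \<Rightarrow> 'e set \<Rightarrow> ('v \<Rightarrow> 'e set) \<Rightarrow> nat \<Rightarrow> nat
                     \<Rightarrow> 'v set pmf \<Rightarrow> 'e set pmf \<Rightarrow> bool" where
  "is_NE V E C b1 b2 s1 s2 \<longleftrightarrow>
     s1 \<in> mixed (A1 V b1) \<and> s2 \<in> mixed (A2 E b2)
     \<and> (\<forall>t1\<in>mixed (A1 V b1). U1 C t1 s2 \<le> U1 C s1 s2)
     \<and> (\<forall>t2\<in>mixed (A2 E b2). U2 C s1 t2 \<le> U2 C s1 s2)"

end

theory Submission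
  imports Defs
begin

text \<open>Let x e be the probability that the attacker of an equilibrium of \<Gamma>(b1, 1) targets e
and \<rho> e the probability that the inspector's strategy s1 monitors e. As b1 < n*, no cover is
played, so some e escapes with positive probability: the attacker always attacks, and only
elements of minimal detection probability v. The inspector is indifferent on the support of
s1; exchanging one inspected vertex for a vertex monitoring an unmonitored target shows
x e \<le> v / b1, and averaging \<rho> over a maximum packing shows v m* \<le> b1. Hence b2 x e \<le> 1 for
b2 \<le> m*, and pipage rounding yields a distribution on b2-subsets with marginals b2 x.
Against s1 it earns the attacker b2 (1 - v), the best possible, and it multiplies every
inspector payoff by b2, so s1 remains a best response.\<close>

text \<open>All strategies have finite support, where the expectation is a finite sum; stating
it as one makes it linear without integrability side conditions.\<close>

definition expect :: "'a pmf \<Rightarrow> ('a \<Rightarrow> real) \<Rightarrow> real" where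
  "expect p f = (\<Sum>a\<in>set_pmf p. pmf p a * f a)"

lemma expect_eq_sum_superset:
  assumes "finite A" "set_pmf p \<subseteq> A"
  shows "expect p f = (\<Sum>a\<in>A. pmf p a * f a)"
  unfolding expect_def
  by (rule sum.mono_neutral_left) (use assms in \<open>auto simp: set_pmf_iff\<close>)

lemma expectation_eq_expect:
  assumes "finite (set_pmf p)"
  shows "measure_pmf.expectation p f = expect p f"
  unfolding expect_def by (subst integral_measure_pmf[OF assms]) auto

lemma expect_pair_pmf:
  assumes "finite (set_pmf p)" "finite (set_pmf q)"
  shows "expect (pair_pmf p q) (\<lambda>(a, b). f a b) = expect p (\<lambda>a. expect q (f a))"
proof -
  have "expect (pair_pmf p q) (\<lambda>(a, b). f a b)
      = (\<Sum>(a, b)\<in>set_pmf p \<times> set_pmf q. pmf p a * (pmf q b * f a b))"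
    unfolding expect_def by (rule sum.cong) (auto simp: pmf_pair)
  also have "\<dots> = expect p (\<lambda>a. expect q (f a))"
    unfolding expect_def sum.cartesian_product[symmetric] by (simp add: sum_distrib_left)
  finally show ?thesis .
qed

lemma expect_return_pmf [simp]: "expect (return_pmf a) f = f a"
  unfolding expect_def by simp

lemma expect_cmult: "expect p (\<lambda>a. c * f a) = c * expect p f"
  unfolding expect_def by (simp add: sum_distrib_left mult_ac)

lemma expect_diff: "expect p (\<lambda>a. f a - g a) = expect p f - expect p g"
  unfolding expect_def by (simp add: right_diff_distrib sum_subtractf)

lemma expect_sum: "expect p (\<lambda>a. \<Sum>i\<in>I. f i a) = (\<Sum>i\<in>I. expect p (f i))"
  unfolding expect_def by (simp add: sum_distrib_left sum.swap[of _ I])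

lemma expect_cong: "(\<And>a. a \<in> set_pmf p \<Longrightarrow> f a = g a) \<Longrightarrow> expect p f = expect p g"
  unfolding expect_def by (rule sum.cong) simp_all

lemma expect_mono: "(\<And>a. a \<in> set_pmf p \<Longrightarrow> f a \<le> g a) \<Longrightarrow> expect p f \<le> expect p g"
  unfolding expect_def by (rule sum_mono) (simp add: mult_left_mono)

lemma expect_nonneg: "(\<And>a. a \<in> set_pmf p \<Longrightarrow> 0 \<le> f a) \<Longrightarrow> 0 \<le> expect p f"
  unfolding expect_def by (rule sum_nonneg) simp

lemma expect_const:
  assumes "finite (set_pmf p)"
  shows "expect p (\<lambda>_. c) = c"
  using sum_pmf_eq_1[OF assms order_refl]
  unfolding expect_def by (simp add: sum_distrib_right[symmetric])

lemma expect_le_const: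
  assumes "finite (set_pmf p)" "\<And>a. a \<in> set_pmf p \<Longrightarrow> f a \<le> c"
  shows "expect p f \<le> c"
  using expect_mono[of p f "\<lambda>_. c"] assms by (simp add: expect_const)

lemma expect_eq_upper_bound_imp_eq:
  assumes "finite (set_pmf p)" "\<And>a. a \<in> set_pmf p \<Longrightarrow> f a \<le> c" "expect p f = c"
    and "a \<in> set_pmf p"
  shows "f a = c"
proof -
  have "(\<Sum>a\<in>set_pmf p. pmf p a * (c - f a)) = 0"
    using expect_diff[of p "\<lambda>_. c" f] assms(3) expect_const[OF assms(1)]
    by (simp add: expect_def)
  then have "pmf p a * (c - f a) = 0"
    using assms by (subst (asm) sum_nonneg_eq_0_iff) auto
  then show ?thesis
    using assms(4) by (simp add: set_pmf_iff)
qed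

definition mix_pmf :: "real \<Rightarrow> 'a pmf \<Rightarrow> 'a pmf \<Rightarrow> 'a pmf" where
  "mix_pmf r p q = bind_pmf (bernoulli_pmf r) (\<lambda>b. if b then p else q)"

lemma set_pmf_mix_pmf: "set_pmf (mix_pmf r p q) \<subseteq> set_pmf p \<union> set_pmf q"
  unfolding mix_pmf_def by (auto split: if_splits)

lemma expect_mix_pmf:
  assumes "0 \<le> r" "r \<le> 1" "finite (set_pmf p)" "finite (set_pmf q)"
  shows "expect (mix_pmf r p q) f = r * expect p f + (1 - r) * expect q f"
proof -
  let ?A = "set_pmf p \<union> set_pmf q"
  have pmf_mix: "pmf (mix_pmf r p q) a = r * pmf p a + (1 - r) * pmf q a" for a
    using assms by (simp add: mix_pmf_def pmf_bind mult_ac)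
  have "expect (mix_pmf r p q) f = (\<Sum>a\<in>?A. pmf (mix_pmf r p q) a * f a)"
    using assms set_pmf_mix_pmf[of r p q] by (intro expect_eq_sum_superset) auto
  also have "\<dots> = (\<Sum>a\<in>?A. r * (pmf p a * f a) + (1 - r) * (pmf q a * f a))"
    by (rule sum.cong) (simp_all add: pmf_mix algebra_simps)
  also have "\<dots> = r * expect p f + (1 - r) * expect q f"
    using assms
    by (simp add: sum.distrib sum_distrib_left[symmetric] expect_eq_sum_superset[of ?A])
  finally show ?thesis .
qed

definition marginal :: "'e set pmf \<Rightarrow> 'e \<Rightarrow> real" where
  "marginal p e = expect p (\<lambda>T. of_bool (e \<in> T))"

definition detection_prob :: "('v \<Rightarrow> 'e set) \<Rightarrow> 'v set pmf \<Rightarrow> 'e \<Rightarrow> real" where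
  "detection_prob C s e = expect s (\<lambda>S. of_bool (e \<in> cov C S))"

lemma marginal_return_pmf: "marginal (return_pmf T) e = of_bool (e \<in> T)"
  unfolding marginal_def by simp

lemma marginal_nonneg: "0 \<le> marginal p e"
  unfolding marginal_def by (rule expect_nonneg) simp

lemma marginal_mix_pmf:
  assumes "0 \<le> r" "r \<le> 1" "finite (set_pmf p)" "finite (set_pmf q)"
  shows "marginal (mix_pmf r p q) e = r * marginal p e + (1 - r) * marginal q e"
  unfolding marginal_def using assms by (rule expect_mix_pmf)

lemma detection_prob_bounds:
  assumes "finite (set_pmf s)"
  shows "0 \<le> detection_prob C s e" "detection_prob C s e \<le> 1"
  unfolding detection_prob_def using assms by (auto intro: expect_nonneg expect_le_const)

lemma expect_card_eq_sum_marginal: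
  assumes "finite E" "\<And>T. T \<in> set_pmf p \<Longrightarrow> T \<subseteq> E"
  shows "expect p (\<lambda>T. real (card T)) = (\<Sum>e\<in>E. marginal p e)"
proof -
  have "expect p (\<lambda>T. real (card T)) = expect p (\<lambda>T. \<Sum>e\<in>E. of_bool (e \<in> T))"
    using assms by (intro expect_cong) (simp add: Int_absorb1)
  then show ?thesis
    unfolding marginal_def expect_sum .
qed

lemma U1_eq_sum_marginal:
  assumes "finite E" "finite (set_pmf s)" "finite (set_pmf p)" "\<And>T. T \<in> set_pmf p \<Longrightarrow> T \<subseteq> E"
  shows "U1 C s p = (\<Sum>e\<in>E. detection_prob C s e * marginal p e)"
proof -
  have detF: "real (detF C S T) = (\<Sum>e\<in>E. of_bool (e \<in> cov C S) * of_bool (e \<in> T))"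
    if "T \<subseteq> E" for S T
  proof -
    have "cov C S \<inter> T = E \<inter> {e. e \<in> cov C S} \<inter> {e. e \<in> T}"
      using that by blast
    then show ?thesis
      using assms(1) by (simp add: detF_def)
  qed
  have "U1 C s p = expect s (\<lambda>S. expect p (\<lambda>T. real (detF C S T)))"
    unfolding U1_def using assms by (simp add: expectation_eq_expect expect_pair_pmf)
  also have "\<dots> = expect s (\<lambda>S. \<Sum>e\<in>E. of_bool (e \<in> cov C S) * marginal p e)"
    by (intro expect_cong)
      (simp add: detF assms(4) expect_sum expect_cmult marginal_def cong: expect_cong)
  also have "\<dots> = (\<Sum>e\<in>E. detection_prob C s e * marginal p e)"
    unfolding expect_sum detection_prob_def
    by (simp add: expect_cmult[symmetric] mult.commute)
  finally show ?thesis .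
qed

lemma U2_eq_sum_marginal:
  assumes "finite E" "finite (set_pmf s)" "finite (set_pmf p)" "\<And>T. T \<in> set_pmf p \<Longrightarrow> T \<subseteq> E"
  shows "U2 C s p = (\<Sum>e\<in>E. marginal p e * (1 - detection_prob C s e))"
proof -
  have "U2 C s p = expect p (\<lambda>T. real (card T)) - U1 C s p"
    unfolding U2_def U1_def[symmetric] using expectation_eq_expect[OF assms(3)] by simp
  then show ?thesis
    using expect_card_eq_sum_marginal[OF assms(1,4)] U1_eq_sum_marginal[OF assms]
    by (simp add: sum_subtractf[symmetric] algebra_simps)
qed

definition pmf_on_k_subsets :: "'e set \<Rightarrow> nat \<Rightarrow> 'e set pmf \<Rightarrow> bool" where
  "pmf_on_k_subsets D k p \<longleftrightarrow> finite (set_pmf p) \<and> (\<forall>T\<in>set_pmf p. T \<subseteq> D \<and> card T = k)"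

lemma pmf_on_k_subsets_mix_pmf:
  assumes "pmf_on_k_subsets D k p" "pmf_on_k_subsets D k q"
  shows "pmf_on_k_subsets D k (mix_pmf r p q)"
  using assms set_pmf_mix_pmf[of r p q] unfolding pmf_on_k_subsets_def
  by (meson Un_iff finite_Un finite_subset subsetD)

definition fractional :: "'e set \<Rightarrow> ('e \<Rightarrow> real) \<Rightarrow> 'e set" where
  "fractional D y = {e\<in>D. 0 < y e \<and> y e < 1}"

lemma integral_marginals_realizable:
  assumes "finite D" "\<forall>e\<in>D. 0 \<le> y e \<and> y e \<le> 1" "(\<Sum>e\<in>D. y e) = real k"
    and "fractional D y = {}"
  shows "\<exists>p. pmf_on_k_subsets D k p \<and> (\<forall>e\<in>D. marginal p e = y e)"
proof -
  let ?T = "{e\<in>D. y e = 1}"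
  have y01: "y e = of_bool (e \<in> ?T)" if "e \<in> D" for e
    using that assms(2,4) unfolding fractional_def by force
  have "real k = (\<Sum>e\<in>D. of_bool (e \<in> ?T))"
    using assms(3) y01 by (metis (no_types, lifting) sum.cong)
  then have "card ?T = k"
    using assms(1) by (simp add: Int_absorb1 Int_def)
  then show ?thesis
    using assms(1) y01
    by (intro exI[of _ "return_pmf ?T"]) (auto simp: pmf_on_k_subsets_def marginal_return_pmf)
qed

lemma fractional_not_singleton:
  assumes "finite D" "\<forall>e\<in>D. 0 \<le> y e \<and> y e \<le> 1" "(\<Sum>e\<in>D. y e) = real k"
  shows "fractional D y \<noteq> {a}"
proof
  assume single: "fractional D y = {a}"
  then have a: "a \<in> D" "0 < y a" "y a < 1"
    unfolding fractional_def by auto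
  let ?T = "{e\<in>D - {a}. y e = 1}"
  have "y e = of_bool (e \<in> ?T)" if "e \<in> D - {a}" for e
  proof -
    have "\<not> (0 < y e \<and> y e < 1)" "0 \<le> y e" "y e \<le> 1"
      using that single assms(2) unfolding fractional_def by auto
    then show ?thesis
      using that by auto
  qed
  then have "(\<Sum>e\<in>D - {a}. y e) = (\<Sum>e\<in>D - {a}. of_bool (e \<in> ?T))"
    by (rule sum.cong[OF refl])
  also have "\<dots> = real (card ?T)"
    using assms(1) by (simp add: Int_absorb1 Int_def)
  finally have "(\<Sum>e\<in>D - {a}. y e) = real (card ?T)" .
  moreover have "(\<Sum>e\<in>D. y e) = y a + (\<Sum>e\<in>D - {a}. y e)"
    using a assms(1) by (simp add: sum.remove)
  ultimately have "y a = real k - real (card ?T)"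
    using assms(3) by simp
  then have "card ?T < k" "k < card ?T + 1"
    using a by linarith+
  then show False
    by simp
qed

lemma card_fractional_less:
  assumes "finite D" "a \<in> fractional D y" "b \<in> fractional D y"
    and "\<forall>e\<in>D - {a, b}. y' e = y e" "y' a \<in> {0, 1} \<or> y' b \<in> {0, 1}"
  shows "card (fractional D y') < card (fractional D y)"
proof (rule psubset_card_mono)
  show "finite (fractional D y)"
    using assms(1) unfolding fractional_def by simp
  have "fractional D y' \<subseteq> fractional D y"
  proof
    fix e
    assume "e \<in> fractional D y'"
    then show "e \<in> fractional D y"
      using assms(2-4) by (cases "e \<in> {a, b}") (auto simp: fractional_def)
  qed
  moreover have "a \<notin> fractional D y' \<or> b \<notin> fractional D y'"
    using assms(5) unfolding fractional_def by auto
  ultimately show "fractional D y' \<subset> fractional D y"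
    using assms(2,3) by blast
qed

text \<open>The pipage step: moving mass between two fractional coordinates a and b, in either
direction until one of them becomes integral, writes y as a convex combination of two
vectors with the same sum and fewer fractional coordinates.\<close>

lemma pipage_split:
  assumes "finite D" "\<forall>e\<in>D. 0 \<le> y e \<and> y e \<le> 1"
    and a: "a \<in> fractional D y" and b: "b \<in> fractional D y" "a \<noteq> b"
  obtains r y1 y2 where "0 \<le> r" "r \<le> 1" "\<forall>e. y e = r * y1 e + (1 - r) * y2 e"
    "\<forall>e\<in>D. 0 \<le> y1 e \<and> y1 e \<le> 1" "(\<Sum>e\<in>D. y1 e) = (\<Sum>e\<in>D. y e)"
    "card (fractional D y1) < card (fractional D y)"
    "\<forall>e\<in>D. 0 \<le> y2 e \<and> y2 e \<le> 1" "(\<Sum>e\<in>D. y2 e) = (\<Sum>e\<in>D. y e)"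
    "card (fractional D y2) < card (fractional D y)"
proof -
  have ya: "a \<in> D" "0 < y a" "y a < 1" and yb: "b \<in> D" "0 < y b" "y b < 1"
    using a b unfolding fractional_def by auto
  define d where "d e = (of_bool (e = a) - of_bool (e = b) :: real)" for e
  define up where "up = min (1 - y a) (y b)"
  define down where "down = min (y a) (1 - y b)"
  define y1 where "y1 e = y e + up * d e" for e
  define y2 where "y2 e = y e - down * d e" for e
  have up: "0 < up" and down: "0 < down"
    using ya yb unfolding up_def down_def by auto
  have sum_d: "(\<Sum>e\<in>D. d e) = 0"
    using ya yb assms(1) unfolding d_def by (simp add: sum_subtractf)
  show ?thesis
  proof
    show "0 \<le> down / (up + down)" "down / (up + down) \<le> 1"
      using up down by auto
    show "\<forall>e. y e = down / (up + down) * y1 e + (1 - down / (up + down)) * y2 e"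
    proof
      fix e
      have "1 - down / (up + down) = up / (up + down)"
        using up down by (simp add: field_simps)
      then have "down / (up + down) * y1 e + (1 - down / (up + down)) * y2 e
          = (down * y1 e + up * y2 e) / (up + down)"
        by (simp add: add_divide_distrib)
      also have "down * y1 e + up * y2 e = (up + down) * y e"
        unfolding y1_def y2_def by (simp add: algebra_simps)
      finally show "y e = down / (up + down) * y1 e + (1 - down / (up + down)) * y2 e"
        using up down by simp
    qed
    show "\<forall>e\<in>D. 0 \<le> y1 e \<and> y1 e \<le> 1" "\<forall>e\<in>D. 0 \<le> y2 e \<and> y2 e \<le> 1"
      using assms(2) b(2) ya yb unfolding y1_def y2_def d_def up_def down_def by auto
    show "(\<Sum>e\<in>D. y1 e) = (\<Sum>e\<in>D. y e)" "(\<Sum>e\<in>D. y2 e) = (\<Sum>e\<in>D. y e)"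
      unfolding y1_def y2_def
      by (simp_all add: sum.distrib sum_subtractf sum_distrib_left[symmetric] sum_d)
    show "card (fractional D y1) < card (fractional D y)"
    proof (rule card_fractional_less[OF assms(1) a b(1)])
      show "\<forall>e\<in>D - {a, b}. y1 e = y e"
        unfolding y1_def d_def by simp
      show "y1 a \<in> {0, 1} \<or> y1 b \<in> {0, 1}"
        using b(2) unfolding y1_def d_def up_def by (simp add: min_def)
    qed
    show "card (fractional D y2) < card (fractional D y)"
    proof (rule card_fractional_less[OF assms(1) a b(1)])
      show "\<forall>e\<in>D - {a, b}. y2 e = y e"
        unfolding y2_def d_def by simp
      show "y2 a \<in> {0, 1} \<or> y2 b \<in> {0, 1}"
        using b(2) unfolding y2_def d_def down_def by (simp add: min_def)
    qed
  qed
qed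

lemma marginals_realizable:
  assumes "finite D" "\<forall>e\<in>D. 0 \<le> y e \<and> y e \<le> 1" "(\<Sum>e\<in>D. y e) = real k"
  shows "\<exists>p. pmf_on_k_subsets D k p \<and> (\<forall>e\<in>D. marginal p e = y e)"
  using assms(2,3)
proof (induction "card (fractional D y)" arbitrary: y rule: less_induct)
  case less
  show ?case
  proof (cases "fractional D y = {}")
    case True
    then show ?thesis
      using integral_marginals_realizable assms(1) less.prems by blast
  next
    case False
    then obtain a b where "a \<in> fractional D y" "b \<in> fractional D y" "a \<noteq> b"
      using fractional_not_singleton[OF assms(1) less.prems] by blast
    then obtain r y1 y2 where r: "0 \<le> r" "r \<le> 1" and y: "\<forall>e. y e = r * y1 e + (1 - r) * y2 e"
      and y1: "\<forall>e\<in>D. 0 \<le> y1 e \<and> y1 e \<le> 1" "(\<Sum>e\<in>D. y1 e) = (\<Sum>e\<in>D. y e)"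
        "card (fractional D y1) < card (fractional D y)"
      and y2: "\<forall>e\<in>D. 0 \<le> y2 e \<and> y2 e \<le> 1" "(\<Sum>e\<in>D. y2 e) = (\<Sum>e\<in>D. y e)"
        "card (fractional D y2) < card (fractional D y)"
      using pipage_split[OF assms(1) less.prems(1)] by blast
    obtain p1 where p1: "pmf_on_k_subsets D k p1" "\<forall>e\<in>D. marginal p1 e = y1 e"
      using less.hyps[OF y1(3) y1(1)] y1(2) less.prems(2) by auto
    obtain p2 where p2: "pmf_on_k_subsets D k p2" "\<forall>e\<in>D. marginal p2 e = y2 e"
      using less.hyps[OF y2(3) y2(1)] y2(2) less.prems(2) by auto
    have "\<forall>e\<in>D. marginal (mix_pmf r p1 p2) e = y e"
      using p1 p2 r y by (simp add: marginal_mix_pmf pmf_on_k_subsets_def)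
    then show ?thesis
      using pmf_on_k_subsets_mix_pmf[OF p1(1) p2(1)] by blast
  qed
qed

lemma finite_A1: "finite V \<Longrightarrow> finite (A1 V b)"
  unfolding A1_def by (rule finite_subset[of _ "Pow V"]) auto

lemma finite_A2: "finite E \<Longrightarrow> finite (A2 E b)"
  unfolding A2_def by (rule finite_subset[of _ "Pow E"]) auto

lemma finite_set_pmf_of_mixed: "finite A \<Longrightarrow> p \<in> mixed A \<Longrightarrow> finite (set_pmf p)"
  unfolding mixed_def using finite_subset by blast

lemma return_pmf_in_mixed: "a \<in> A \<Longrightarrow> return_pmf a \<in> mixed A"
  unfolding mixed_def by simp

lemma n_star_le_card:
  assumes "finite V" "is_set_cover V E C S"
  shows "n_star V E C \<le> card S"
proof -
  have "finite {S. is_set_cover V E C S}"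
    by (rule finite_subset[of _ "Pow V"]) (use assms(1) in \<open>auto simp: is_set_cover_def\<close>)
  then show ?thesis
    unfolding n_star_def using assms(2) by simp
qed

lemma obtain_max_set_packing:
  assumes "finite E"
  obtains P where "is_set_packing V E C P" "card P = m_star V E C"
proof -
  have "finite {T. is_set_packing V E C T}"
    by (rule finite_subset[of _ "Pow E"]) (use assms in \<open>auto simp: is_set_packing_def\<close>)
  moreover have "{} \<in> {T. is_set_packing V E C T}"
    unfolding is_set_packing_def by simp
  ultimately have "m_star V E C \<in> card ` {T. is_set_packing V E C T}"
    unfolding m_star_def by (intro Max_in) auto
  then show ?thesis
    using that by auto
qed

lemma card_cov_inter_packing_le:
  assumes "\<forall>i\<in>V. card (C i \<inter> P) \<le> 1" "S \<subseteq> V" "finite S"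
  shows "card (cov C S \<inter> P) \<le> card S"
proof -
  have "cov C S \<inter> P = (\<Union>i\<in>S. C i \<inter> P)"
    unfolding cov_def by auto
  then have "card (cov C S \<inter> P) \<le> (\<Sum>i\<in>S. card (C i \<inter> P))"
    using card_UN_le[OF assms(3), of "\<lambda>i. C i \<inter> P"] by simp
  also have "\<dots> \<le> card S"
    using sum_bounded_above[of S "\<lambda>i. card (C i \<inter> P)" 1] assms by auto
  finally show ?thesis .
qed

lemma cov_insert: "cov C (insert i S) = C i \<union> cov C S"
  unfolding cov_def by simp

definition exclusive :: "('v \<Rightarrow> 'e set) \<Rightarrow> 'v set \<Rightarrow> 'v \<Rightarrow> 'e set" where
  "exclusive C S j = C j - cov C (S - {j})"

lemma cov_subset_exclusive_Un: "cov C S \<subseteq> exclusive C S j \<union> cov C (S - {j})"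
  unfolding exclusive_def cov_def by auto

lemma sum_exclusive_le:
  fixes x :: "'e \<Rightarrow> real"
  assumes "finite S" "finite E" "\<forall>e\<in>E. 0 \<le> x e"
  shows "(\<Sum>j\<in>S. sum x (E \<inter> exclusive C S j)) \<le> sum x (E \<inter> cov C S)"
proof -
  have "(\<Sum>j\<in>S. sum x (E \<inter> exclusive C S j)) = sum x (\<Union>j\<in>S. E \<inter> exclusive C S j)"
    using assms(1,2) by (intro sum.UNION_disjoint[symmetric]) (auto simp: exclusive_def cov_def)
  also have "\<dots> \<le> sum x (E \<inter> cov C S)"
    by (rule sum_mono2) (use assms in \<open>auto simp: exclusive_def cov_def\<close>)
  finally show ?thesis .
qed

lemma exists_le_average:
  fixes f :: "'a \<Rightarrow> real"
  assumes "finite S" "S \<noteq> {}"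
  obtains j where "j \<in> S" "f j * card S \<le> sum f S"
proof -
  have "Min (f ` S) \<in> f ` S"
    using assms by simp
  then obtain j where j: "j \<in> S" "f j = Min (f ` S)"
    by auto
  then have "f j \<le> f k" if "k \<in> S" for k
    using assms(1) that by simp
  then show ?thesis
    using that[OF j(1)] sum_bounded_below[of S "f j" f] by (simp add: mult.commute)
qed

lemma weight_le_of_exchange:
  fixes x :: "'e \<Rightarrow> real"
  assumes "finite E" "\<forall>e\<in>E. 0 \<le> x e"
    and "sum x (E \<inter> cov C S) = v" "sum x (E \<inter> cov C S') \<le> v"
    and "R \<subseteq> E \<inter> cov C S" "E \<inter> cov C S - R \<subseteq> cov C S'"
    and "e \<in> E" "e \<notin> cov C S" "e \<in> cov C S'"
  shows "x e \<le> sum x R"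
proof -
  have "x e + (v - sum x R) = sum x (insert e (E \<inter> cov C S - R))"
    using assms(1,3,5,8) by (simp add: sum_diff finite_subset)
  also have "\<dots> \<le> sum x (E \<inter> cov C S')"
    using assms by (intro sum_mono2) auto
  finally show ?thesis
    using assms(4) by simp
qed

text \<open>Either S is not full and can be extended by a vertex monitoring e, or by averaging
some j \<in> S covers exclusively a weight of at most v / b and can be exchanged for one.\<close>

lemma uncovered_weight_le:
  fixes x :: "'e \<Rightarrow> real"
  assumes "finite V" "finite E" "\<forall>e\<in>E. 0 \<le> x e" "0 < b"
    and best: "\<And>S'. S' \<in> A1 V b \<Longrightarrow> sum x (E \<inter> cov C S') \<le> v"
    and S: "S \<in> A1 V b" "sum x (E \<inter> cov C S) = v"
    and e: "e \<in> E" "e \<notin> cov C S" and i: "i \<in> V" "e \<in> C i"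
  shows "x e * b \<le> v"
proof -
  have SV: "S \<subseteq> V" "card S \<le> b" and finS: "finite S"
    using S(1) assms(1) finite_subset unfolding A1_def by auto
  have "0 \<le> v"
    using S(2) assms(3) by (metis IntE sum_nonneg)
  consider "card S < b" | "card S = b"
    using SV(2) by linarith
  then show ?thesis
  proof cases
    case 1
    let ?S' = "insert i S"
    have "?S' \<in> A1 V b"
      using 1 SV finS i(1) by (simp add: A1_def card_insert_if)
    then have "sum x (E \<inter> cov C ?S') \<le> v"
      by (rule best)
    then have "x e \<le> sum x {}"
      by (rule weight_le_of_exchange[OF assms(2,3) S(2)]) (auto simp: cov_insert i(2) e)
    then show ?thesis
      using \<open>0 \<le> v\<close> mult_nonpos_nonneg[of "x e" "real b"] by simp
  next
    case 2
    obtain j where j: "j \<in> S"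
      "sum x (E \<inter> exclusive C S j) * card S \<le> (\<Sum>j\<in>S. sum x (E \<inter> exclusive C S j))"
      by (rule exists_le_average[OF finS]) (use 2 assms(4) in auto)
    then have j_small: "sum x (E \<inter> exclusive C S j) * b \<le> v"
      using sum_exclusive_le[OF finS assms(2,3), of C] S(2) 2 by simp
    let ?S' = "insert i (S - {j})"
    have "?S' \<in> A1 V b"
      using 2 SV finS i(1) j(1) assms(4) by (auto simp: A1_def card_insert_if)
    then have "sum x (E \<inter> cov C ?S') \<le> v"
      by (rule best)
    then have "x e \<le> sum x (E \<inter> exclusive C S j)"
    proof (rule weight_le_of_exchange[OF assms(2,3) S(2)])
      show "E \<inter> cov C S - E \<inter> exclusive C S j \<subseteq> cov C ?S'"
        using cov_subset_exclusive_Un[of C S j] by (auto simp: cov_insert)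
      show "E \<inter> exclusive C S j \<subseteq> E \<inter> cov C S"
        using j(1) by (auto simp: exclusive_def cov_def)
    qed (auto simp: cov_insert i(2) e)
    then show ?thesis
      using j_small by (meson mult_right_mono of_nat_0_le_iff order_trans)
  qed
qed

locale unit_budget_equilibrium =
  fixes V :: "'v set" and E :: "'e set" and C :: "'v \<Rightarrow> 'e set"
    and b1 :: nat and s1 :: "'v set pmf" and s2 :: "'e set pmf"
  assumes model: "detection_model V E C"
    and b1_pos: "0 < b1" and b1_less_n_star: "b1 < n_star V E C"
    and equilibrium: "is_NE V E C b1 1 s1 s2"
begin

abbreviation \<rho> :: "'e \<Rightarrow> real" where "\<rho> \<equiv> detection_prob C s1"

abbreviation x :: "'e \<Rightarrow> real" where "x \<equiv> marginal s2"

definition v :: real where "v = 1 - U2 C s1 s2"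

lemma finite_V: "finite V" and finite_E: "finite E" and C_subset_E: "i \<in> V \<Longrightarrow> C i \<subseteq> E"
  and monitored: "e \<in> E \<Longrightarrow> \<exists>i\<in>V. e \<in> C i"
  using model unfolding detection_model_def by auto

lemma s1_mixed: "s1 \<in> mixed (A1 V b1)" and s2_mixed: "s2 \<in> mixed (A2 E 1)"
  and inspector_best: "t \<in> mixed (A1 V b1) \<Longrightarrow> U1 C t s2 \<le> U1 C s1 s2"
  and attacker_best: "p \<in> mixed (A2 E 1) \<Longrightarrow> U2 C s1 p \<le> U2 C s1 s2"
  using equilibrium unfolding is_NE_def by auto

lemma finite_s1: "finite (set_pmf s1)"
  by (rule finite_set_pmf_of_mixed[OF finite_A1[OF finite_V] s1_mixed])

lemma finite_s2: "finite (set_pmf s2)"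
  by (rule finite_set_pmf_of_mixed[OF finite_A2[OF finite_E] s2_mixed])

lemma s1_support: "S \<in> set_pmf s1 \<Longrightarrow> S \<in> A1 V b1"
  using s1_mixed unfolding mixed_def by auto

lemma s2_support: "T \<in> set_pmf s2 \<Longrightarrow> T \<subseteq> E \<and> card T \<le> 1"
  using s2_mixed unfolding mixed_def A2_def by auto

lemma U2_s1_eq_sum:
  assumes "t \<in> mixed (A2 E b)"
  shows "U2 C s1 t = (\<Sum>e\<in>E. marginal t e * (1 - \<rho> e))"
  using assms finite_set_pmf_of_mixed[OF finite_A2[OF finite_E] assms]
  by (intro U2_eq_sum_marginal[OF finite_E finite_s1]) (auto simp: mixed_def A2_def)

lemma v_le_detection_prob:
  assumes "e \<in> E"
  shows "v \<le> \<rho> e"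
proof -
  have "return_pmf {e} \<in> mixed (A2 E 1)"
    using assms by (intro return_pmf_in_mixed) (simp add: A2_def)
  moreover have "U2 C s1 (return_pmf {e}) = 1 - \<rho> e"
    using U2_s1_eq_sum[OF calculation] assms finite_E by (simp add: marginal_return_pmf)
  ultimately show ?thesis
    using attacker_best unfolding v_def by fastforce
qed

lemma exists_detection_prob_less_1: "\<exists>e\<in>E. \<rho> e < 1"
proof (rule ccontr)
  assume "\<not> ?thesis"
  then have always: "\<rho> e = 1" if "e \<in> E" for e
    using that detection_prob_bounds[OF finite_s1, of C e] by force
  obtain S where S: "S \<in> set_pmf s1"
    using set_pmf_not_empty by fast
  then have SV: "S \<subseteq> V" and card_S: "card S \<le> b1"
    using s1_support unfolding A1_def by auto
  have "E \<subseteq> cov C S"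
  proof
    fix e
    assume "e \<in> E"
    then have "expect s1 (\<lambda>S. of_bool (e \<in> cov C S)) = 1"
      using always unfolding detection_prob_def by simp
    then have "of_bool (e \<in> cov C S) = (1::real)"
      using expect_eq_upper_bound_imp_eq[where f = "\<lambda>S. of_bool (e \<in> cov C S)" and c = 1,
          OF finite_s1 _ _ S]
      by simp
    then show "e \<in> cov C S"
      by simp
  qed
  moreover have "cov C S \<subseteq> E"
    using SV C_subset_E unfolding cov_def by blast
  ultimately have "is_set_cover V E C S"
    unfolding is_set_cover_def using SV by blast
  then show False
    using n_star_le_card[OF finite_V] card_S b1_less_n_star by fastforce
qed

lemma v_less_1: "v < 1"
  using exists_detection_prob_less_1 v_le_detection_prob by fastforce

text \<open>Complementary slackness: the attacker's payoff 1 - v is positive and no single element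
pays more, so the attacker attacks with probability one and only elements with \<rho> e = v.\<close>

lemma sum_x_eq_1: "(\<Sum>e\<in>E. x e) = 1"
  and detection_prob_eq_v: "e \<in> E \<Longrightarrow> x e \<noteq> 0 \<Longrightarrow> \<rho> e = v"
proof -
  define u where "u = 1 - v"
  have u_pos: "0 < u"
    using v_less_1 unfolding u_def by simp
  have u_eq: "u = (\<Sum>e\<in>E. x e * (1 - \<rho> e))"
    using U2_s1_eq_sum[OF s2_mixed] unfolding u_def v_def by simp
  have term_le: "x e * (1 - \<rho> e) \<le> x e * u" if "e \<in> E" for e
    using v_le_detection_prob[OF that] marginal_nonneg[of s2 e]
    unfolding u_def by (intro mult_left_mono) auto
  have "(\<Sum>e\<in>E. x e) = expect s2 (\<lambda>T. real (card T))"
    using expect_card_eq_sum_marginal[OF finite_E] s2_support by simp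
  also have "\<dots> \<le> 1"
    using s2_support by (intro expect_le_const[OF finite_s2]) auto
  finally have "(\<Sum>e\<in>E. x e) * u \<le> u"
    using u_pos by (simp add: mult_left_le_one_le)
  moreover have "(\<Sum>e\<in>E. x e * (1 - \<rho> e)) \<le> (\<Sum>e\<in>E. x e) * u"
    unfolding sum_distrib_right by (rule sum_mono) (rule term_le)
  ultimately have tight: "(\<Sum>e\<in>E. x e) * u = u"
    and "(\<Sum>e\<in>E. x e * u - x e * (1 - \<rho> e)) = 0"
    using u_eq by (simp_all add: sum_subtractf sum_distrib_right)
  then have "x e * u - x e * (1 - \<rho> e) = 0" if "e \<in> E" for e
    using that term_le finite_E by (subst (asm) sum_nonneg_eq_0_iff) auto
  then have "x e = 0 \<or> \<rho> e = v" if "e \<in> E" for e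
    using that unfolding u_def by (simp add: right_diff_distrib[symmetric])
  then show "e \<in> E \<Longrightarrow> x e \<noteq> 0 \<Longrightarrow> \<rho> e = v"
    by blast
  show "(\<Sum>e\<in>E. x e) = 1"
    using tight u_pos by simp
qed

lemma U1_eq_v: "U1 C s1 s2 = v"
proof -
  have "U1 C s1 s2 = (\<Sum>e\<in>E. \<rho> e * x e)"
    using s2_support by (intro U1_eq_sum_marginal[OF finite_E finite_s1 finite_s2]) auto
  also have "\<dots> = (\<Sum>e\<in>E. v * x e)"
    using detection_prob_eq_v by (intro sum.cong) auto
  finally show ?thesis
    using sum_x_eq_1 by (simp add: sum_distrib_left[symmetric])
qed

lemma U1_against_s2:
  assumes "finite (set_pmf t)"
  shows "U1 C t s2 = expect t (\<lambda>S. sum x (E \<inter> cov C S))"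
proof -
  have "U1 C t s2 = (\<Sum>e\<in>E. detection_prob C t e * x e)"
    using s2_support by (intro U1_eq_sum_marginal[OF finite_E assms finite_s2]) auto
  also have "\<dots> = expect t (\<lambda>S. \<Sum>e\<in>E. x e * of_bool (e \<in> cov C S))"
    unfolding expect_sum detection_prob_def expect_cmult by (simp add: mult.commute)
  also have "\<dots> = expect t (\<lambda>S. sum x (E \<inter> cov C S))"
    by (rule expect_cong) (simp add: finite_E)
  finally show ?thesis .
qed

lemma covered_weight_le_v:
  assumes "S \<in> A1 V b1"
  shows "sum x (E \<inter> cov C S) \<le> v"
  using inspector_best[OF return_pmf_in_mixed[OF assms]] U1_against_s2[of "return_pmf S"] U1_eq_v
  by simp

lemma covered_weight_eq_v:
  assumes "S \<in> set_pmf s1"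
  shows "sum x (E \<inter> cov C S) = v"
  using expect_eq_upper_bound_imp_eq[where f = "\<lambda>S. sum x (E \<inter> cov C S)" and c = v,
      OF finite_s1 _ _ assms]
    covered_weight_le_v s1_support U1_against_s2[OF finite_s1] U1_eq_v
  by simp

lemma x_mult_b1_le_v:
  assumes "e \<in> E"
  shows "x e * b1 \<le> v"
proof (cases "x e = 0")
  case True
  obtain S where "S \<in> set_pmf s1"
    using set_pmf_not_empty by fast
  then have "0 \<le> v"
    using covered_weight_eq_v marginal_nonneg by (metis sum_nonneg)
  then show ?thesis
    using True by simp
next
  case False
  have "\<exists>S\<in>set_pmf s1. e \<notin> cov C S"
  proof (rule ccontr)
    assume "\<not> ?thesis"
    then have "\<rho> e = 1"
      unfolding detection_prob_def by (simp add: expect_const[OF finite_s1] cong: expect_cong)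
    then show False
      using detection_prob_eq_v[OF assms False] v_less_1 by simp
  qed
  then obtain S where S: "S \<in> set_pmf s1" "e \<notin> cov C S"
    by blast
  obtain i where i: "i \<in> V" "e \<in> C i"
    using monitored[OF assms] by blast
  show ?thesis
    by (rule uncovered_weight_le[OF finite_V finite_E _ b1_pos covered_weight_le_v
          s1_support[OF S(1)] covered_weight_eq_v[OF S(1)] assms S(2) i])
      (simp add: marginal_nonneg)
qed

lemma v_mult_m_star_le_b1: "v * m_star V E C \<le> b1"
proof -
  obtain P where P: "is_set_packing V E C P" "card P = m_star V E C"
    using obtain_max_set_packing[OF finite_E] .
  then have PE: "P \<subseteq> E"
    unfolding is_set_packing_def by simp
  have finite_P: "finite P"
    using finite_subset[OF PE finite_E] .
  have "v * card P \<le> (\<Sum>e\<in>P. \<rho> e)"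
    using sum_bounded_below[of P v \<rho>] PE v_le_detection_prob by (auto simp: mult.commute)
  also have "\<dots> = expect s1 (\<lambda>S. real (card (cov C S \<inter> P)))"
    using finite_P unfolding detection_prob_def expect_sum[symmetric]
    by (simp add: Int_commute Int_def)
  also have "\<dots> \<le> b1"
  proof (rule expect_le_const[OF finite_s1])
    fix S
    assume "S \<in> set_pmf s1"
    then have S: "S \<subseteq> V" "card S \<le> b1"
      using s1_support unfolding A1_def by auto
    moreover have "finite S"
      using finite_subset[OF S(1) finite_V] .
    ultimately show "real (card (cov C S \<inter> P)) \<le> real b1"
      using card_cov_inter_packing_le[of V C P S] P(1) unfolding is_set_packing_def by simp
  qed
  finally show ?thesis
    using P(2) by simp
qed

lemma scaled_x_le_1:
  assumes "e \<in> E" "b2 \<le> m_star V E C"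
  shows "b2 * x e \<le> 1"
proof -
  have "(x e * m_star V E C) * b1 \<le> 1 * b1"
    using mult_right_mono[OF x_mult_b1_le_v[OF assms(1)], of "m_star V E C"] v_mult_m_star_le_b1
    by (simp add: mult_ac)
  then have "x e * m_star V E C \<le> 1"
    using b1_pos by simp
  moreover have "b2 * x e \<le> m_star V E C * x e"
    using assms(2) marginal_nonneg by (intro mult_right_mono) auto
  ultimately show ?thesis
    by (simp add: mult.commute)
qed

lemma U2_s1_le:
  assumes "t \<in> mixed (A2 E b)"
  shows "U2 C s1 t \<le> b * (1 - v)"
proof -
  have finite_t: "finite (set_pmf t)" and t_support: "T \<in> set_pmf t \<Longrightarrow> T \<subseteq> E \<and> card T \<le> b" for T
    using assms finite_set_pmf_of_mixed[OF finite_A2[OF finite_E]] unfolding mixed_def A2_def by auto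
  have "U2 C s1 t \<le> (\<Sum>e\<in>E. marginal t e * (1 - v))"
    unfolding U2_s1_eq_sum[OF assms] using v_le_detection_prob marginal_nonneg
    by (intro sum_mono mult_left_mono) auto
  also have "\<dots> = expect t (\<lambda>T. real (card T)) * (1 - v)"
    using expect_card_eq_sum_marginal[OF finite_E] t_support by (simp add: sum_distrib_right)
  also have "\<dots> \<le> b * (1 - v)"
    using t_support v_less_1 by (intro mult_right_mono expect_le_const[OF finite_t]) auto
  finally show ?thesis .
qed

lemma is_NE_of_scaled_marginals:
  assumes p: "pmf_on_k_subsets E b2 p" and marginal_p: "\<forall>e\<in>E. marginal p e = b2 * x e"
  shows "is_NE V E C b1 b2 s1 p"
proof -
  have finite_p: "finite (set_pmf p)" and p_support: "T \<in> set_pmf p \<Longrightarrow> T \<subseteq> E" for T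
    using p unfolding pmf_on_k_subsets_def by auto
  have p_mixed: "p \<in> mixed (A2 E b2)"
    using p unfolding pmf_on_k_subsets_def mixed_def A2_def by auto
  have U1_p: "U1 C t p = b2 * U1 C t s2" if "finite (set_pmf t)" for t
    using U1_eq_sum_marginal[OF finite_E that finite_p p_support]
      U1_eq_sum_marginal[OF finite_E that finite_s2] s2_support marginal_p
    by (simp add: sum_distrib_left mult_ac)
  have "U1 C t p \<le> U1 C s1 p" if "t \<in> mixed (A1 V b1)" for t
    using inspector_best[OF that] U1_p[OF finite_s1]
      U1_p[OF finite_set_pmf_of_mixed[OF finite_A1[OF finite_V] that]]
    by (simp add: mult_left_mono)
  moreover have "U2 C s1 p = b2 * (1 - v)"
    using U2_s1_eq_sum[OF p_mixed] U2_s1_eq_sum[OF s2_mixed] marginal_p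
    by (simp add: v_def sum_distrib_left mult_ac)
  ultimately show ?thesis
    using s1_mixed p_mixed U2_s1_le unfolding is_NE_def by auto
qed

lemma exists_NE_with_attack_budget:
  assumes "b2 \<le> m_star V E C"
  shows "\<exists>p. p \<in> mixed (A2 E b2) \<and> is_NE V E C b1 b2 s1 p"
proof -
  let ?y = "\<lambda>e. real b2 * x e"
  have "\<forall>e\<in>E. 0 \<le> ?y e \<and> ?y e \<le> 1"
    using scaled_x_le_1[OF _ assms] marginal_nonneg[of s2] by simp
  moreover have "(\<Sum>e\<in>E. ?y e) = real b2"
    using sum_x_eq_1 by (simp add: sum_distrib_left[symmetric])
  ultimately obtain p where p: "pmf_on_k_subsets E b2 p" "\<forall>e\<in>E. marginal p e = ?y e"
    using marginals_realizable[OF finite_E, of ?y b2] by blast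
  then have NE: "is_NE V E C b1 b2 s1 p"
    by (rule is_NE_of_scaled_marginals)
  then have "p \<in> mixed (A2 E b2)"
    unfolding is_NE_def by blast
  with NE show ?thesis
    by blast
qed

end

theorem mainTheorem14:
  fixes V :: "'v set" and E :: "'e set" and C :: "'v \<Rightarrow> 'e set"
    and b1 :: nat and s1 :: "'v set pmf" and s2 :: "'e set pmf"
  assumes "detection_model V E C"
    and "0 < b1" and "b1 < n_star V E C"
    and "is_NE V E C b1 1 s1 s2"
  shows "\<forall>b2::nat. 0 < b2 \<and> b2 < m_star V E C \<longrightarrow>
           (\<exists>s2'. s2' \<in> mixed (A2 E b2) \<and> is_NE V E C b1 b2 s1 s2')"
proof (intro allI impI)
  fix b2 :: nat
  assume "0 < b2 \<and> b2 < m_star V E C"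
  interpret unit_budget_equilibrium V E C b1 s1 s2
    using assms by unfold_locales
  show "\<exists>s2'. s2' \<in> mixed (A2 E b2) \<and> is_NE V E C b1 b2 s1 s2'"
    by (rule exists_NE_with_attack_budget) (use \<open>0 < b2 \<and> b2 < m_star V E C\<close> in linarith)
qed

end
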